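(* Fix any configuration of open and closed sites on $\mathcal{L}$. Then for every $n\ge 1$, $$\xi_n=\overline{\xi}_n\cap[\ell_n,\infty).$$ Moreover, if $\xi_n\neq\emptyset$ then $u_n=\overline{u}_n$.
   Context: Let $\mathcal{L}=\{(n,m)\in\mathbb{Z}^2:n\ge0,\ n+m\text{ even}\}$. Each site of $\mathcal{L}$ is open or closed. For $z,z'\in\mathcal{L}$ write $z\to z'$ if there exist $k\ge0$ and sites $z=z_0,\dots,z_k=z'$ of $\mathcal{L}$ such that $z_0,\dots,z_{k-1}$ are open and $z_{i+1}-z_i\in\{(1,1),(2,0),(1,-1)\}$ for every $i$. Let $o=(0,0)$. Use the conventions $\sup\emptyset=-\infty$ and $\inf\emptyset=+\infty$. Define $\xi_n=\{x:o\to(n,x)\}$, $u_n=\sup\xi_n$ and $\ell_n=\inf\xi_n$. For $n\ge1$, let $$\overline{\xi}_n=\{x:\exists y\le0\text{ such that }(0,y)\to(n,x)\text{ or }(1,y)\to(n,x)\},$$ where only sites of $\mathcal{L}$ are considered, and let $\overline{u}_n=\sup\overline{\xi}_n$. *)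

theory Defs
  imports Main "HOL-Library.Extended_Real"
begin

definition Lat :: "(int \<times> int) set" where
  "Lat = {(n, m). n \<ge> 0 \<and> even (n + m)}"

definition steps :: "(int \<times> int) set" where
  "steps = {(1, 1), (2, 0), (1, -1)}"

text \<open>A configuration is a predicate opn saying which sites are open.
  reach opn z z' means z -> z': a path z = z0, ..., zk = z' of sites of L
  with z0..z(k-1) open and increments in steps (k = 0 allowed).\<close>
inductive reach :: "(int \<times> int \<Rightarrow> bool) \<Rightarrow> int \<times> int \<Rightarrow> int \<times> int \<Rightarrow> bool"
  for opn where
  refl: "z \<in> Lat \<Longrightarrow> reach opn z z"
| step: "z \<in> Lat \<Longrightarrow> opn z \<Longrightarrow> s \<in> steps \<Longrightarrow> reach opn (fst z + fst s, snd z + snd s) z' \<Longrightarrow> reach opn z z'"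

definition xi :: "(int \<times> int \<Rightarrow> bool) \<Rightarrow> nat \<Rightarrow> int set" where
  "xi opn n = {x. reach opn (0, 0) (int n, x)}"

definition xibar :: "(int \<times> int \<Rightarrow> bool) \<Rightarrow> nat \<Rightarrow> int set" where
  "xibar opn n = {x. \<exists>y \<le> 0. reach opn (0, y) (int n, x) \<or> reach opn (1, y) (int n, x)}"

text \<open>Sup/Inf in the extended reals: Sup {} = -infinity, Inf {} = +infinity.\<close>
definition u_n :: "(int \<times> int \<Rightarrow> bool) \<Rightarrow> nat \<Rightarrow> ereal" where
  "u_n opn n = Sup ((\<lambda>x. ereal (real_of_int x)) ` xi opn n)"

definition l_n :: "(int \<times> int \<Rightarrow> bool) \<Rightarrow> nat \<Rightarrow> ereal" where
  "l_n opn n = Inf ((\<lambda>x. ereal (real_of_int x)) ` xi opn n)"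

definition ubar_n :: "(int \<times> int \<Rightarrow> bool) \<Rightarrow> nat \<Rightarrow> ereal" where
  "ubar_n opn n = Sup ((\<lambda>x. ereal (real_of_int x)) ` xibar opn n)"

end

theory Submission
  imports Defs
begin

text \<open>Encode the process by the columns that are alive at each level k: column x is alive if
  (k, x) is reached, or if (k - 1, x) is reached and open, so that its step (2, 0) jumps over
  level k. Between consecutive levels an alive column moves by at most one, and by parity two
  alive columns can only swap order by meeting. Running the clusters of the origin and of the
  left half-line side by side, every column of the latter to the right of some column of the
  former is therefore a column of the former; restricted to the right parity this is the claim.\<close>

lemma reach_in_Lat: "reach opn a b \<Longrightarrow> a \<in> Lat \<and> b \<in> Lat"
  by (induction rule: reach.induct) auto

lemma reach_light_cone:
  "reach opn a b \<Longrightarrow> fst a \<le> fst b \<and> \<bar>snd b - snd a\<bar> \<le> fst b - fst a"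
  by (induction rule: reach.induct) (auto simp: steps_def)

lemma reach_from_open: "reach opn a b \<Longrightarrow> a \<noteq> b \<Longrightarrow> opn a"
  by (cases rule: reach.cases) auto

lemma reach_append_step:
  assumes "reach opn a p" "opn p" "s \<in> steps" "(fst p + fst s, snd p + snd s) \<in> Lat"
  shows "reach opn a (fst p + fst s, snd p + snd s)"
  using assms by (induction rule: reach.induct) (meson reach.refl reach.step)+

lemma reach_last_step:
  assumes "reach opn a b" "fst a < fst b"
  shows "\<exists>p s. reach opn a p \<and> opn p \<and> s \<in> steps \<and> b = (fst p + fst s, snd p + snd s)"
  using assms
proof (induction rule: reach.induct)
  case (refl z)
  then show ?case by simp
next
  case (step z s z')
  let ?z1 = "(fst z + fst s, snd z + snd s)"
  show ?case
  proof (cases "fst ?z1 < fst z'")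
    case True
    then obtain p s' where "reach opn ?z1 p" "opn p" "s' \<in> steps"
      "z' = (fst p + fst s', snd p + snd s')" using step.IH by auto
    moreover have "reach opn z p" using step.hyps(1-3) \<open>reach opn ?z1 p\<close> by (rule reach.step)
    ultimately show ?thesis by blast
  next
    case False
    then have "z' = ?z1" using reach_light_cone[OF step.hyps(4)] by (cases z') auto
    then show ?thesis using step.hyps reach.refl by blast
  qed
qed

definition reached :: "(int \<times> int \<Rightarrow> bool) \<Rightarrow> (int \<times> int) set \<Rightarrow> int \<Rightarrow> int \<Rightarrow> bool" where
  "reached opn A k x \<longleftrightarrow> (\<exists>a\<in>A. reach opn a (k, x))"

definition alive :: "(int \<times> int \<Rightarrow> bool) \<Rightarrow> (int \<times> int) set \<Rightarrow> int \<Rightarrow> int \<Rightarrow> bool" where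
  "alive opn A k x \<longleftrightarrow> reached opn A k x \<or> (reached opn A (k - 1) x \<and> opn (k - 1, x))"

text \<open>The possible moves of an alive column z from level k to level k + 1: for odd k + z the
  column is alive only through the open site (k - 1, z), whose jump lands on (k + 1, z).\<close>
definition moves :: "(int \<times> int \<Rightarrow> bool) \<Rightarrow> int \<Rightarrow> int \<Rightarrow> int \<Rightarrow> bool" where
  "moves opn k z x \<longleftrightarrow> (even (k + z) \<and> opn (k, z) \<and> \<bar>x - z\<bar> \<le> 1) \<or> (odd (k + z) \<and> x = z)"

lemma reached_even: "reached opn A k x \<Longrightarrow> even (k + x)"
  unfolding reached_def using reach_in_Lat by (auto simp: Lat_def)

lemma alive_iff_reached:
  assumes "even (k + x)"
  shows "alive opn A k x \<longleftrightarrow> reached opn A k x"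
  using assms reached_even[of opn A "k - 1" x] unfolding alive_def by auto

lemma alive_step_back:
  assumes sources: "\<forall>a\<in>A. fst a \<le> k" and "alive opn A (k + 1) x"
  shows "\<exists>z. alive opn A k z \<and> moves opn k z x"
proof (cases "reached opn A (k + 1) x")
  case True
  then obtain a where a: "a \<in> A" "reach opn a (k + 1, x)" unfolding reached_def by auto
  then obtain p s where p: "reach opn a p" "opn p" "s \<in> steps"
      "(k + 1, x) = (fst p + fst s, snd p + snd s)"
    using reach_last_step[OF a(2)] sources by fastforce
  have parity: "even (fst p + snd p)" using reach_in_Lat[OF p(1)] by (cases p) (auto simp: Lat_def)
  have reached_p: "reached opn A (fst p) (snd p)" using a(1) p(1) unfolding reached_def by auto
  consider "p = (k, x - 1)" | "p = (k, x + 1)" | "p = (k - 1, x)"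
    using p(3,4) by (cases p) (auto simp: steps_def)
  then show ?thesis
  proof cases
    case 1
    then show ?thesis using reached_p parity p(2) unfolding alive_def moves_def by auto
  next
    case 2
    then show ?thesis using reached_p parity p(2) unfolding alive_def moves_def by auto
  next
    case 3
    then have "alive opn A k x" using reached_p p(2) unfolding alive_def by auto
    moreover have "moves opn k x x" using 3 parity unfolding moves_def by auto
    ultimately show ?thesis by blast
  qed
next
  case False
  then have "reached opn A k x" "opn (k, x)" using assms(2) unfolding alive_def by auto
  then show ?thesis using reached_even unfolding alive_def moves_def by fastforce
qed

lemma alive_step_forward:
  assumes "alive opn A k z" "moves opn k z x"
  shows "alive opn A (k + 1) x"
proof (cases "reached opn A k z")
  case True
  then obtain a where a: "a \<in> A" "reach opn a (k, z)" unfolding reached_def by auto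
  have parity: "even (k + z)" using reached_even[OF True] .
  then have open_kz: "opn (k, z)" and "\<bar>x - z\<bar> \<le> 1" using assms(2) unfolding moves_def by auto
  then consider "x = z" | "x = z + 1" | "x = z - 1" by linarith
  then show ?thesis
  proof cases
    case 1
    then show ?thesis using True open_kz unfolding alive_def by auto
  next
    case 2
    have "reach opn a (fst (k, z) + 1, snd (k, z) + 1)"
      using reach_append_step[OF a(2) open_kz, of "(1, 1)"] parity reach_light_cone[OF a(2)]
        reach_in_Lat[OF a(2)] by (auto simp: steps_def Lat_def)
    then show ?thesis using a 2 unfolding alive_def reached_def by auto
  next
    case 3
    have "reach opn a (fst (k, z) + 1, snd (k, z) + - 1)"
      using reach_append_step[OF a(2) open_kz, of "(1, -1)"] parity reach_light_cone[OF a(2)]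
        reach_in_Lat[OF a(2)] by (auto simp: steps_def Lat_def)
    then show ?thesis using a 3 unfolding alive_def reached_def by auto
  qed
next
  case False
  then have prev: "reached opn A (k - 1) z" "opn (k - 1, z)"
    using assms(1) unfolding alive_def by auto
  then obtain a where a: "a \<in> A" "reach opn a (k - 1, z)" unfolding reached_def by auto
  have "x = z" using reached_even[OF prev(1)] assms(2) unfolding moves_def by auto
  moreover have "reach opn a (fst (k - 1, z) + 2, snd (k - 1, z) + 0)"
    using reach_append_step[OF a(2) prev(2), of "(2, 0)"] reach_light_cone[OF a(2)]
      reach_in_Lat[OF a(2)] by (auto simp: steps_def Lat_def)
  ultimately show ?thesis using a unfolding alive_def reached_def by (auto simp: ac_simps)
qed

lemma moves_no_crossing:
  assumes "moves opn k z x" "moves opn k w w'" "z < w" "w' < x"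
  shows False
proof -
  have "\<bar>x - z\<bar> \<le> 1" "\<bar>w' - w\<bar> \<le> 1" using assms(1,2) unfolding moves_def by auto
  then have "x = z + 1" "w = z + 1" "w' = z" using assms(3,4) by auto
  then show False using assms(1,2) unfolding moves_def by auto
qed

lemma alive_right_of_alive_propagates:
  assumes "\<forall>a\<in>A \<union> B. fst a \<le> k0" "k0 \<le> k"
    and start: "\<And>x w. alive opn B k0 x \<Longrightarrow> alive opn A k0 w \<Longrightarrow> w \<le> x \<Longrightarrow> alive opn A k0 x"
  shows "alive opn B k x \<Longrightarrow> alive opn A k w \<Longrightarrow> w \<le> x \<Longrightarrow> alive opn A k x"
  using assms(2)
proof (induction k arbitrary: x w rule: int_ge_induct)
  case base
  then show ?case using start by blast
next
  case (step k)
  show ?case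
  proof (cases "w = x")
    case False
    have sources: "\<forall>a\<in>A. fst a \<le> k" "\<forall>a\<in>B. fst a \<le> k"
      using assms(1) step.hyps by (meson UnI1 UnI2 order_trans)+
    obtain z where z: "alive opn B k z" "moves opn k z x"
      using alive_step_back[OF sources(2) step.prems(1)] by blast
    obtain v where v: "alive opn A k v" "moves opn k v w"
      using alive_step_back[OF sources(1) step.prems(2)] by blast
    have "v \<le> z" using moves_no_crossing[OF z(2) v(2)] False step.prems(3) by fastforce
    then show ?thesis using step.IH z v alive_step_forward by blast
  qed (use step.prems in simp)
qed

definition left_sources :: "(int \<times> int) set" where
  "left_sources = {(k, y). (k = 0 \<or> k = 1) \<and> y \<le> 0}"

lemma xi_eq_reached: "xi opn n = {x. reached opn {(0, 0)} (int n) x}"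
  unfolding xi_def reached_def by auto

lemma xibar_eq_reached: "xibar opn n = {x. reached opn left_sources (int n) x}"
  unfolding xibar_def reached_def left_sources_def by auto

lemma alive_origin_level_one:
  assumes "alive opn {(0, 0)} 1 w"
  shows "opn (0, 0)" and "-1 \<le> w"
proof -
  show "opn (0, 0)"
    using assms reach_from_open reach_light_cone unfolding alive_def reached_def by fastforce
  show "-1 \<le> w"
    using assms reach_light_cone unfolding alive_def reached_def by fastforce
qed

lemma alive_left_sources_level_one: "alive opn left_sources 1 x \<Longrightarrow> x \<le> 1"
  using reach_light_cone unfolding alive_def reached_def left_sources_def by fastforce

lemma alive_origin_level_one_if_open:
  assumes "opn (0, 0)" "\<bar>x\<bar> \<le> 1"
  shows "alive opn {(0, 0)} 1 x"
proof (cases "x = 0")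
  case True
  have "reach opn (0, 0) (0, 0)" by (rule reach.refl) (simp add: Lat_def)
  then show ?thesis using True assms(1) unfolding alive_def reached_def by auto
next
  case False
  then have x: "x = 1 \<or> x = -1" using assms(2) by auto
  have "reach opn (0, 0) (1, x)"
    by (rule reach.step[where s="(1, x)"])
      (use assms(1) x in \<open>auto simp: Lat_def steps_def intro: reach.refl\<close>)
  then show ?thesis unfolding alive_def reached_def by simp
qed

lemma xibar_right_of_xi:
  assumes "n \<ge> 1" "w \<in> xi opn n" "x \<in> xibar opn n" "w \<le> x"
  shows "x \<in> xi opn n"
proof -
  have start: "alive opn {(0, 0)} 1 x'"
    if "alive opn left_sources 1 x'" "alive opn {(0, 0)} 1 w'" "w' \<le> x'" for x' w'
    using that alive_origin_level_one alive_left_sources_level_one alive_origin_level_one_if_open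
    by (metis abs_le_iff minus_le_iff order.trans)
  have "reached opn left_sources (int n) x" using assms(3) xibar_eq_reached by auto
  moreover have "alive opn {(0, 0)} (int n) w"
    using assms(2) unfolding xi_eq_reached alive_def by auto
  ultimately have "alive opn {(0, 0)} (int n) x"
    using alive_right_of_alive_propagates[of "{(0, 0)}" left_sources 1 "int n" opn] start assms(1,4)
    unfolding alive_def by (auto simp: left_sources_def)
  then show ?thesis
    using alive_iff_reached reached_even \<open>reached opn left_sources (int n) x\<close> xi_eq_reached
    by blast
qed

lemma int_set_eq_above_Inf:
  fixes S T :: "int set"
  assumes "S \<subseteq> T" and up: "\<And>w x. w \<in> S \<Longrightarrow> x \<in> T \<Longrightarrow> w \<le> x \<Longrightarrow> x \<in> S"
  shows "S = {x \<in> T. Inf ((\<lambda>x. ereal (real_of_int x)) ` S) \<le> ereal (real_of_int x)}"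
proof (intro equalityI subsetI)
  fix x assume "x \<in> S"
  then show "x \<in> {x \<in> T. Inf ((\<lambda>x. ereal (real_of_int x)) ` S) \<le> ereal (real_of_int x)}"
    using assms(1) by (auto intro: Inf_lower)
next
  fix x assume x: "x \<in> {x \<in> T. Inf ((\<lambda>x. ereal (real_of_int x)) ` S) \<le> ereal (real_of_int x)}"
  have "\<exists>w\<in>S. w \<le> x"
  proof (rule ccontr)
    assume "\<not> (\<exists>w\<in>S. w \<le> x)"
    then have "ereal (real_of_int (x + 1)) \<le> Inf ((\<lambda>x. ereal (real_of_int x)) ` S)"
      by (auto intro!: Inf_greatest)
    then show False using x order_trans by fastforce
  qed
  then show "x \<in> S" using x up by blast
qed

lemma int_set_Sup_eq:
  fixes S T :: "int set"
  assumes "S \<subseteq> T" "S \<noteq> {}"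
    and up: "\<And>w x. w \<in> S \<Longrightarrow> x \<in> T \<Longrightarrow> w \<le> x \<Longrightarrow> x \<in> S"
  shows "Sup ((\<lambda>x. ereal (real_of_int x)) ` S) = Sup ((\<lambda>x. ereal (real_of_int x)) ` T)"
proof (rule antisym)
  show "Sup ((\<lambda>x. ereal (real_of_int x)) ` S) \<le> Sup ((\<lambda>x. ereal (real_of_int x)) ` T)"
    using assms(1) by (intro Sup_subset_mono image_mono)
next
  obtain w where w: "w \<in> S" using assms(2) by auto
  have "ereal (real_of_int x) \<le> Sup ((\<lambda>x. ereal (real_of_int x)) ` S)" if "x \<in> T" for x
  proof (cases "w \<le> x")
    case True
    then show ?thesis using up w that by (auto intro: Sup_upper)
  next
    case False
    then have "ereal (real_of_int x) \<le> ereal (real_of_int w)" by simp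
    also have "\<dots> \<le> Sup ((\<lambda>x. ereal (real_of_int x)) ` S)" using w by (auto intro: Sup_upper)
    finally show ?thesis .
  qed
  then show "Sup ((\<lambda>x. ereal (real_of_int x)) ` T) \<le> Sup ((\<lambda>x. ereal (real_of_int x)) ` S)"
    by (auto intro: Sup_least)
qed

theorem mainTheorem4:
  fixes opn :: "int \<times> int \<Rightarrow> bool" and n :: nat
  assumes "n \<ge> 1"
  shows "xi opn n = {x \<in> xibar opn n. l_n opn n \<le> ereal (real_of_int x)}
         \<and> (xi opn n \<noteq> {} \<longrightarrow> u_n opn n = ubar_n opn n)"
proof -
  have sub: "xi opn n \<subseteq> xibar opn n" unfolding xi_def xibar_def by auto
  have up: "\<And>w x. w \<in> xi opn n \<Longrightarrow> x \<in> xibar opn n \<Longrightarrow> w \<le> x \<Longrightarrow> x \<in> xi opn n"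
    using xibar_right_of_xi[OF assms] by blast
  have "xi opn n = {x \<in> xibar opn n. l_n opn n \<le> ereal (real_of_int x)}"
    unfolding l_n_def by (rule int_set_eq_above_Inf[OF sub up])
  moreover have "u_n opn n = ubar_n opn n" if "xi opn n \<noteq> {}"
    unfolding u_n_def ubar_n_def by (rule int_set_Sup_eq[OF sub that up])
  ultimately show ?thesis by blast
qed

end
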